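(* Let $X=c_0(\mathbb N)$ or $X=\ell^p(\mathbb N)$ with $1\le p<\infty$, let $\lambda=(\lambda_k)_{k\in\mathbb N}\in\ell^\infty(\mathbb N)$, and define $T_\lambda:X\to X$ by $T_\lambda(x_1,x_2,\ldots)=(\lambda_1x_1,\lambda_2x_2,\ldots)$. (A) The following are equivalent: (i) $T_\lambda$ is recurrent; (ii) $T_\lambda$ is rigid; (iii) $|\lambda_k|=1$ for every $k\in\mathbb N$. (B) The following are equivalent: (i) $T_\lambda$ is uniformly rigid; (ii) there is a sequence $(\theta_k)_{k\in\mathbb N}\subset\mathbb R$ with $\lambda_k=e^{2\pi i\theta_k}$ for every $k$ and $\liminf_{n\to\infty}\sup_{k\in\mathbb N}|e^{2\pi in\theta_k}-1|=0$.
   Context: An operator $T$ on a Banach space $X$ is recurrent if for every non-empty open $U\subset X$ there is a positive integer $k$ with $U\cap T^{-k}(U)\neq\emptyset$; rigid if there is an increasing sequence of positive integers $(k_n)$ with $T^{k_n}x\to x$ for all $x\in X$; uniformly rigid if there is an increasing sequence of positive integers $(k_n)$ with $\|T^{k_n}-I\|\to0$. *)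

theory Defs
  imports "HOL-Analysis.Analysis"
begin

text \<open>Sequence spaces over the complex scalars, realised as carrier sets of
  sequences nat => complex together with their norms (indices start at 0).\<close>

definition c0_space :: "(nat \<Rightarrow> complex) set" where
  "c0_space = {x. x \<longlonglongrightarrow> 0}"

definition c0_norm :: "(nat \<Rightarrow> complex) \<Rightarrow> real" where
  "c0_norm x = (SUP k. cmod (x k))"

definition lp_space :: "real \<Rightarrow> (nat \<Rightarrow> complex) set" where
  "lp_space p = {x. summable (\<lambda>k. cmod (x k) powr p)}"

definition lp_norm :: "real \<Rightarrow> (nat \<Rightarrow> complex) \<Rightarrow> real" where
  "lp_norm p x = (\<Sum>k. cmod (x k) powr p) powr (1 / p)"

definition admissible_space :: "(nat \<Rightarrow> complex) set \<Rightarrow> ((nat \<Rightarrow> complex) \<Rightarrow> real) \<Rightarrow> bool" where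
  "admissible_space X N \<longleftrightarrow>
     (X = c0_space \<and> N = c0_norm) \<or> (\<exists>p::real. 1 \<le> p \<and> X = lp_space p \<and> N = lp_norm p)"

definition diag_op :: "(nat \<Rightarrow> complex) \<Rightarrow> (nat \<Rightarrow> complex) \<Rightarrow> (nat \<Rightarrow> complex)" where
  "diag_op lam x = (\<lambda>k. lam k * x k)"

definition open_in_norm :: "(nat \<Rightarrow> complex) set \<Rightarrow> ((nat \<Rightarrow> complex) \<Rightarrow> real) \<Rightarrow> (nat \<Rightarrow> complex) set \<Rightarrow> bool" where
  "open_in_norm X N U \<longleftrightarrow> U \<subseteq> X \<and> (\<forall>x\<in>U. \<exists>e>0. \<forall>y\<in>X. N (y - x) < e \<longrightarrow> y \<in> U)"

definition recurrent :: "(nat \<Rightarrow> complex) set \<Rightarrow> ((nat \<Rightarrow> complex) \<Rightarrow> real) \<Rightarrow> ((nat \<Rightarrow> complex) \<Rightarrow> (nat \<Rightarrow> complex)) \<Rightarrow> bool" where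
  "recurrent X N T \<longleftrightarrow>
     (\<forall>U. open_in_norm X N U \<and> U \<noteq> {} \<longrightarrow> (\<exists>k::nat. k > 0 \<and> (\<exists>x\<in>U. (T ^^ k) x \<in> U)))"

definition rigid :: "(nat \<Rightarrow> complex) set \<Rightarrow> ((nat \<Rightarrow> complex) \<Rightarrow> real) \<Rightarrow> ((nat \<Rightarrow> complex) \<Rightarrow> (nat \<Rightarrow> complex)) \<Rightarrow> bool" where
  "rigid X N T \<longleftrightarrow>
     (\<exists>ks::nat \<Rightarrow> nat. strict_mono ks \<and> (\<forall>n. ks n > 0) \<and>
        (\<forall>x\<in>X. (\<lambda>n. N ((T ^^ ks n) x - x)) \<longlonglongrightarrow> 0))"

definition op_norm :: "(nat \<Rightarrow> complex) set \<Rightarrow> ((nat \<Rightarrow> complex) \<Rightarrow> real) \<Rightarrow> ((nat \<Rightarrow> complex) \<Rightarrow> (nat \<Rightarrow> complex)) \<Rightarrow> real" where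
  "op_norm X N S = (SUP x\<in>{x\<in>X. N x \<le> 1}. N (S x))"

definition uniformly_rigid :: "(nat \<Rightarrow> complex) set \<Rightarrow> ((nat \<Rightarrow> complex) \<Rightarrow> real) \<Rightarrow> ((nat \<Rightarrow> complex) \<Rightarrow> (nat \<Rightarrow> complex)) \<Rightarrow> bool" where
  "uniformly_rigid X N T \<longleftrightarrow>
     (\<exists>ks::nat \<Rightarrow> nat. strict_mono ks \<and> (\<forall>n. ks n > 0) \<and>
        (\<lambda>n. op_norm X N (\<lambda>x. (T ^^ ks n) x - x)) \<longlonglongrightarrow> 0)"

end

theory Submission
  imports Defs
begin

text \<open>Everything rests on a few properties shared by c_0 and l^p: coordinates are bounded by
  the norm, unit vectors have norm 1, bounded coordinatewise multipliers act boundedly, and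
  uniformly bounded multipliers tending to 0 coordinatewise send every x to 0 in norm (dominated
  convergence). If |\<lambda>_k| \<noteq> 1, the open set of x whose k-th coordinate has modulus close to 1
  is disjoint from all its images, so recurrence fails. If all |\<lambda>_k| = 1, Dirichlet's
  simultaneous approximation theorem yields times n_j with \<lambda>_k^(n_j) \<rightarrow> 1 for every k, and
  dominated convergence turns this into rigidity. Finally, the operator norm of T^n - I is
  sup_k |\<lambda>_k^n - 1|, which translates uniform rigidity into the liminf condition.\<close>

lemma lp_coordinate_le_norm:
  assumes p: "1 \<le> p" and x: "x \<in> lp_space p"
  shows "cmod (x k) \<le> lp_norm p x"
proof -
  have s: "summable (\<lambda>k. cmod (x k) powr p)" using x by (simp add: lp_space_def)
  have "cmod (x k) powr p \<le> (\<Sum>k. cmod (x k) powr p)"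
    using sum_le_suminf[OF s, of "{k}"] by simp
  hence "(cmod (x k) powr p) powr (1/p) \<le> (\<Sum>k. cmod (x k) powr p) powr (1/p)"
    using p by (intro powr_mono2) auto
  moreover have "(cmod (x k) powr p) powr (1/p) = cmod (x k)"
    using p by (simp add: powr_powr)
  ultimately show ?thesis by (simp add: lp_norm_def)
qed

lemma powr_norm_diff_le:
  fixes a b :: complex
  assumes p: "0 \<le> p"
  shows "cmod (a - b) powr p \<le> 2 powr p * (cmod a powr p + cmod b powr p)"
proof -
  have "cmod (a - b) \<le> 2 * max (cmod a) (cmod b)"
    using norm_triangle_ineq4[of a b] by linarith
  hence "cmod (a - b) powr p \<le> (2 * max (cmod a) (cmod b)) powr p"
    using p by (intro powr_mono2) auto
  also have "\<dots> = 2 powr p * max (cmod a) (cmod b) powr p"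
    by (simp add: powr_mult)
  also have "max (cmod a) (cmod b) powr p \<le> cmod a powr p + cmod b powr p"
    by (cases "cmod a \<le> cmod b") (auto simp: max_def)
  finally show ?thesis by simp
qed

lemma lp_space_diff:
  assumes p: "0 \<le> p" and x: "x \<in> lp_space p" and y: "y \<in> lp_space p"
  shows "x - y \<in> lp_space p"
proof -
  have s: "summable (\<lambda>k. 2 powr p * (cmod (x k) powr p + cmod (y k) powr p))"
    using x y by (intro summable_mult summable_add) (auto simp: lp_space_def)
  have "summable (\<lambda>k. cmod (x k - y k) powr p)"
    by (rule summable_comparison_test[OF _ s]) (auto intro!: powr_norm_diff_le p)
  thus ?thesis by (simp add: lp_space_def)
qed

lemma lp_multiplier:
  assumes p: "1 \<le> p" and x: "x \<in> lp_space p" and d: "\<And>k. cmod (d k) \<le> B"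
  shows "(\<lambda>k. d k * x k) \<in> lp_space p" and "lp_norm p (\<lambda>k. d k * x k) \<le> B * lp_norm p x"
proof -
  have B: "0 \<le> B" using d[of 0] norm_ge_zero[of "d 0"] by linarith
  have s: "summable (\<lambda>k. cmod (x k) powr p)" using x by (simp add: lp_space_def)
  have s2: "summable (\<lambda>k. B powr p * cmod (x k) powr p)" using s by (rule summable_mult)
  have le: "cmod (d k * x k) powr p \<le> B powr p * cmod (x k) powr p" for k
    using p d[of k] by (auto simp: norm_mult powr_mult intro!: mult_right_mono powr_mono2)
  have s3: "summable (\<lambda>k. cmod (d k * x k) powr p)"
    by (rule summable_comparison_test[OF _ s2]) (auto intro!: le)
  thus "(\<lambda>k. d k * x k) \<in> lp_space p" by (simp add: lp_space_def)
  have "(\<Sum>k. cmod (d k * x k) powr p) \<le> (\<Sum>k. B powr p * cmod (x k) powr p)"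
    by (rule suminf_le[OF le s3 s2])
  also have "\<dots> = B powr p * (\<Sum>k. cmod (x k) powr p)" using s by (rule suminf_mult)
  finally have "(\<Sum>k. cmod (d k * x k) powr p) powr (1/p) \<le> (B powr p * (\<Sum>k. cmod (x k) powr p)) powr (1/p)"
    using p by (intro powr_mono2) (auto intro!: suminf_nonneg s3)
  also have "\<dots> = B * (\<Sum>k. cmod (x k) powr p) powr (1/p)"
    using p B by (simp add: powr_mult powr_powr suminf_nonneg[OF s])
  finally show "lp_norm p (\<lambda>k. d k * x k) \<le> B * lp_norm p x" by (simp add: lp_norm_def)
qed

lemma lp_unit_vector:
  assumes p: "1 \<le> p"
  shows "(\<lambda>j. if j = k then 1 else 0) \<in> lp_space p" and "lp_norm p (\<lambda>j. if j = k then 1 else 0) = 1"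
proof -
  have "(\<lambda>j. cmod (if j = k then 1 else 0) powr p) = (\<lambda>j. if j = k then 1 else 0)"
    using p by auto
  moreover have "(\<lambda>j. if j = k then 1 else 0) sums (1::real)"
    using sums_single[of k "\<lambda>_. 1::real"] by simp
  ultimately show "(\<lambda>j. if j = k then 1 else 0) \<in> lp_space p"
    and "lp_norm p (\<lambda>j. if j = k then 1 else 0) = 1"
    unfolding lp_space_def lp_norm_def by (auto simp: sums_iff)
qed

lemma lp_multipliers_tendsto_0:
  assumes p: "1 \<le> p" and x: "x \<in> lp_space p" and d: "\<And>j k. cmod (d j k) \<le> B"
    and lim: "\<And>k. (\<lambda>j. d j k) \<longlonglongrightarrow> 0"
  shows "(\<lambda>j. lp_norm p (\<lambda>k. d j k * x k)) \<longlonglongrightarrow> 0"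
proof -
  have s: "summable (\<lambda>k. cmod (x k) powr p)" using x by (simp add: lp_space_def)
  have s2: "summable (\<lambda>k. B powr p * cmod (x k) powr p)" using s by (rule summable_mult)
  have le: "norm (cmod (d j k * x k) powr p) \<le> B powr p * cmod (x k) powr p" for j k
    using p d[of j k] by (auto simp: norm_mult powr_mult intro!: mult_right_mono powr_mono2)
  have coordinate_lim: "(\<lambda>j. cmod (d j k * x k) powr p) \<longlonglongrightarrow> 0" for k
  proof -
    have "(\<lambda>j. cmod (d j k * x k)) \<longlonglongrightarrow> 0"
      using tendsto_norm_zero[OF tendsto_mult_left_zero[OF lim[of k], of "x k"]] by simp
    thus ?thesis using p by (intro tendsto_zero_powrI) auto
  qed
  have "(\<lambda>j. \<Sum>k. cmod (d j k * x k) powr p) \<longlonglongrightarrow> (\<Sum>k. (0::real))"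
    using tannerys_theorem[where a="\<lambda>k j. cmod (d j k * x k) powr p" and b="\<lambda>_. 0"
        and M="\<lambda>k. B powr p * cmod (x k) powr p" and F=sequentially, OF coordinate_lim _ s2]
    using le by (auto simp: always_eventually)
  hence "(\<lambda>j. (\<Sum>k. cmod (d j k * x k) powr p) powr (1/p)) \<longlonglongrightarrow> 0"
  proof (intro tendsto_zero_powrI)
    have "summable (\<lambda>k. cmod (d j k * x k) powr p)" for j
      by (rule summable_comparison_test[OF _ s2]) (use le in auto)
    thus "\<forall>\<^sub>F j in sequentially. 0 \<le> (\<Sum>k. cmod (d j k * x k) powr p)"
      by (auto intro!: always_eventually suminf_nonneg)
  qed (use p in auto)
  thus ?thesis by (simp add: lp_norm_def)
qed

lemma c0_bdd_above:
  assumes x: "x \<in> c0_space"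
  shows "bdd_above (range (\<lambda>k. cmod (x k)))"
proof -
  have "Bseq x" using x by (auto simp: c0_space_def intro: convergent_imp_Bseq convergentI)
  then obtain K where "\<And>n. norm (x n) \<le> K" by (auto simp: Bseq_def)
  thus ?thesis by (intro bdd_aboveI2[where M=K]) simp
qed

lemma c0_coordinate_le_norm:
  assumes x: "x \<in> c0_space"
  shows "cmod (x k) \<le> c0_norm x"
  unfolding c0_norm_def by (rule cSUP_upper[OF _ c0_bdd_above[OF x]]) auto

lemma c0_norm_le:
  assumes "\<And>k. cmod (x k) \<le> C"
  shows "c0_norm x \<le> C"
  unfolding c0_norm_def by (rule cSUP_least) (simp_all add: assms)

lemma c0_space_diff:
  assumes x: "x \<in> c0_space" and y: "y \<in> c0_space"
  shows "x - y \<in> c0_space"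
  using tendsto_diff[of x 0 sequentially y 0] x y by (auto simp: c0_space_def fun_diff_def)

lemma c0_multiplier:
  assumes x: "x \<in> c0_space" and d: "\<And>k. cmod (d k) \<le> B"
  shows "(\<lambda>k. d k * x k) \<in> c0_space" and "c0_norm (\<lambda>k. d k * x k) \<le> B * c0_norm x"
proof -
  have B: "0 \<le> B" using d[of 0] norm_ge_zero[of "d 0"] by linarith
  have le: "cmod (d k * x k) \<le> B * cmod (x k)" for k
    unfolding norm_mult by (rule mult_right_mono[OF d norm_ge_zero])
  have "(\<lambda>k. B * cmod (x k)) \<longlonglongrightarrow> 0"
    using x by (auto simp: c0_space_def intro: tendsto_mult_right_zero tendsto_norm_zero)
  hence "(\<lambda>k. d k * x k) \<longlonglongrightarrow> 0"
    by (rule Lim_null_comparison[OF always_eventually, rotated]) (rule allI, rule le)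
  thus "(\<lambda>k. d k * x k) \<in> c0_space" by (simp add: c0_space_def)
  show "c0_norm (\<lambda>k. d k * x k) \<le> B * c0_norm x"
    using le order_trans mult_left_mono[OF c0_coordinate_le_norm[OF x] B] by (blast intro: c0_norm_le)
qed

lemma c0_unit_vector:
  shows "(\<lambda>j. if j = k then 1 else 0) \<in> c0_space" and "c0_norm (\<lambda>j. if j = k then 1 else 0) = 1"
proof -
  have "\<forall>\<^sub>F j in sequentially. (if j = k then 1 else 0) = (0::complex)"
    unfolding eventually_sequentially by (rule exI[of _ "Suc k"]) simp
  thus e: "(\<lambda>j. if j = k then 1 else 0) \<in> c0_space"
    unfolding c0_space_def mem_Collect_eq by (rule tendsto_eventually)
  show "c0_norm (\<lambda>j. if j = k then 1 else 0) = 1"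
    using c0_norm_le[of "\<lambda>j. if j = k then 1 else 0" 1] c0_coordinate_le_norm[OF e, of k]
    by simp
qed

lemma c0_multipliers_tendsto_0:
  assumes x: "x \<in> c0_space" and d: "\<And>j k. cmod (d j k) \<le> B"
    and lim: "\<And>k. (\<lambda>j. d j k) \<longlonglongrightarrow> 0"
  shows "(\<lambda>j. c0_norm (\<lambda>k. d j k * x k)) \<longlonglongrightarrow> 0"
proof (rule LIMSEQ_I)
  fix r :: real assume r: "0 < r"
  have B: "0 \<le> B" using d[of 0 0] norm_ge_zero[of "d 0 0"] by linarith
  define \<epsilon> where "\<epsilon> = r / (2 * (B + 1))"
  have "\<epsilon> > 0" and B\<epsilon>: "B * \<epsilon> \<le> r / 2"
    using r B by (auto simp: \<epsilon>_def field_simps)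
  obtain K where K: "\<And>k. k \<ge> K \<Longrightarrow> cmod (x k) < \<epsilon>"
    using LIMSEQ_D[of x 0, OF _ \<open>\<epsilon> > 0\<close>] x by (auto simp: c0_space_def)
  have "\<forall>\<^sub>F j in sequentially. cmod (d j k * x k) < r / 2" for k
    using tendsto_iff[THEN iffD1, OF tendsto_mult_left_zero[OF lim[of k], of "x k"], rule_format, of "r/2"] r
    by (simp add: dist_norm)
  hence "\<forall>\<^sub>F j in sequentially. \<forall>k\<in>{..<K}. cmod (d j k * x k) < r / 2"
    by (intro eventually_ball_finite) auto
  then obtain J where J: "\<And>j k. j \<ge> J \<Longrightarrow> k < K \<Longrightarrow> cmod (d j k * x k) < r / 2"
    by (auto simp: eventually_sequentially)
  show "\<exists>J. \<forall>j\<ge>J. norm (c0_norm (\<lambda>k. d j k * x k) - 0) < r"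
  proof (intro exI allI impI)
    fix j assume j: "J \<le> j"
    have "cmod (d j k * x k) \<le> r / 2" for k
    proof (cases "k < K")
      case True thus ?thesis using J[OF j True] by simp
    next
      case False
      hence "cmod (d j k) * cmod (x k) \<le> B * \<epsilon>"
        using d[of j k] K[of k] B by (intro mult_mono) auto
      thus ?thesis using B\<epsilon> by (simp add: norm_mult)
    qed
    hence "c0_norm (\<lambda>k. d j k * x k) \<le> r / 2" by (rule c0_norm_le)
    moreover have "0 \<le> c0_norm (\<lambda>k. d j k * x k)"
      by (rule order_trans[OF norm_ge_zero c0_coordinate_le_norm[where k=0]])
        (rule c0_multiplier(1)[OF x], rule d)
    ultimately show "norm (c0_norm (\<lambda>k. d j k * x k) - 0) < r" using r by simp
  qed
qed

locale sequence_space =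
  fixes X :: "(nat \<Rightarrow> complex) set" and N :: "(nat \<Rightarrow> complex) \<Rightarrow> real"
  assumes diff_mem: "x \<in> X \<Longrightarrow> y \<in> X \<Longrightarrow> x - y \<in> X"
    and multiplier_mem: "x \<in> X \<Longrightarrow> (\<And>k. cmod (d k) \<le> B) \<Longrightarrow> (\<lambda>k. d k * x k) \<in> X"
    and norm_multiplier_le: "x \<in> X \<Longrightarrow> (\<And>k. cmod (d k) \<le> B) \<Longrightarrow> N (\<lambda>k. d k * x k) \<le> B * N x"
    and coordinate_le_norm: "x \<in> X \<Longrightarrow> cmod (x k) \<le> N x"
    and unit_vector_mem: "(\<lambda>j. if j = k then 1 else 0) \<in> X"
    and norm_unit_vector: "N (\<lambda>j. if j = k then 1 else 0) = 1"
    and multipliers_tendsto_0: "x \<in> X \<Longrightarrow> (\<And>j k. cmod (D j k) \<le> B) \<Longrightarrow>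
      (\<And>k. (\<lambda>j. D j k) \<longlonglongrightarrow> 0) \<Longrightarrow> (\<lambda>j. N (\<lambda>k. D j k * x k)) \<longlonglongrightarrow> 0"

lemma sequence_space_c0: "sequence_space c0_space c0_norm"
  by unfold_locales (fact c0_space_diff c0_multiplier c0_coordinate_le_norm
      c0_unit_vector c0_multipliers_tendsto_0)+

lemma sequence_space_lp:
  assumes "1 \<le> p"
  shows "sequence_space (lp_space p) (lp_norm p)"
proof -
  have "0 \<le> p" using assms by simp
  show ?thesis
    by unfold_locales (fact lp_space_diff[OF \<open>0 \<le> p\<close>] lp_multiplier[OF assms]
      lp_coordinate_le_norm[OF assms] lp_unit_vector[OF assms] lp_multipliers_tendsto_0[OF assms])+
qed

lemma sequence_space_admissible: "admissible_space X N \<Longrightarrow> sequence_space X N"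
  using sequence_space_c0 sequence_space_lp unfolding admissible_space_def by auto

lemma funpow_diag_op: "(diag_op lam ^^ n) x = (\<lambda>k. lam k ^ n * x k)"
  by (induction n) (auto simp: diag_op_def mult.assoc)

lemma funpow_diag_op_minus: "(diag_op lam ^^ n) x - x = (\<lambda>k. (lam k ^ n - 1) * x k)"
  by (auto simp: funpow_diag_op fun_eq_iff algebra_simps)

lemma power_minus_one_le_SUP:
  assumes "bounded (range lam)"
  shows "cmod (lam k ^ n - 1) \<le> (SUP k. cmod (lam k ^ n - 1))"
proof (rule cSUP_upper)
  obtain C where C: "\<And>k. cmod (lam k) \<le> C" using assms by (auto simp: bounded_iff)
  have "cmod (lam k ^ n - 1) \<le> C ^ n + 1" for k
    using norm_triangle_ineq4[of "lam k ^ n" 1] power_mono[OF C norm_ge_zero, of k n]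
    by (simp add: norm_power)
  thus "bdd_above (range (\<lambda>k. cmod (lam k ^ n - 1)))" by (rule bdd_aboveI2)
qed simp

lemma rigid_imp_recurrent:
  assumes maps: "\<And>x. x \<in> X \<Longrightarrow> T x \<in> X" and "rigid X N T"
  shows "recurrent X N T"
  unfolding recurrent_def
proof (intro allI impI)
  fix U assume U: "open_in_norm X N U \<and> U \<noteq> {}"
  then obtain x where "x \<in> U" by auto
  with U obtain e where "e > 0" and e: "\<And>y. y \<in> X \<Longrightarrow> N (y - x) < e \<Longrightarrow> y \<in> U"
    and "x \<in> X" unfolding open_in_norm_def by blast
  from \<open>rigid X N T\<close> \<open>x \<in> X\<close> obtain ks where "\<And>n. ks n > 0"
    and lim: "(\<lambda>n. N ((T ^^ ks n) x - x)) \<longlonglongrightarrow> 0"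
    unfolding rigid_def by blast
  obtain n where "\<forall>m\<ge>n. norm (N ((T ^^ ks m) x - x) - 0) < e"
    using LIMSEQ_D[OF lim \<open>e > 0\<close>] by blast
  hence "N ((T ^^ ks n) x - x) < e" by auto
  moreover have "(T ^^ m) x \<in> X" for m by (induction m) (use \<open>x \<in> X\<close> maps in auto)
  ultimately have "(T ^^ ks n) x \<in> U" using e by blast
  thus "\<exists>k>0. \<exists>x\<in>U. (T ^^ k) x \<in> U" using \<open>ks n > 0\<close> \<open>x \<in> U\<close> by blast
qed

lemma power_mult_far_from_one:
  fixes a c :: real
  assumes "0 \<le> a" "a \<noteq> 1" "0 < n" and c: "\<bar>c - 1\<bar> < \<bar>a - 1\<bar> / (a + 1)"
  shows "\<bar>a - 1\<bar> / (a + 1) \<le> \<bar>a ^ n * c - 1\<bar>"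
proof (cases "a < 1")
  case True
  hence "a ^ n \<le> a" using assms power_decreasing[of 1 n a] by simp
  moreover have "(1 - a) / (a + 1) \<le> 1" using assms(1) by (simp add: field_simps)
  hence "0 < c" "c < 1 + (1 - a) / (a + 1)" using c True by (auto simp: abs_less_iff)
  ultimately have "a ^ n * c \<le> a * (1 + (1 - a) / (a + 1))"
    by (meson less_eq_real_def mult_mono assms(1))
  also have "\<dots> = 1 - (1 - a) / (a + 1)" using assms(1) by (simp add: field_simps)
  finally show ?thesis using True by simp
next
  case False
  hence "a > 1" using assms(2) by simp
  hence "a \<le> a ^ n" using assms power_increasing[of 1 n a] by simp
  moreover have "1 - (a - 1) / (a + 1) < c" using c \<open>a > 1\<close> by (auto simp: abs_less_iff)
  moreover have "0 < 1 - (a - 1) / (a + 1)" using \<open>a > 1\<close> by (simp add: field_simps)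
  ultimately have "a * (1 - (a - 1) / (a + 1)) \<le> a ^ n * c"
    using \<open>a > 1\<close> by (intro mult_mono) auto
  moreover have "a * (1 - (a - 1) / (a + 1)) = 1 + (a - 1) / (a + 1)"
    using \<open>a > 1\<close> by (simp add: field_simps)
  ultimately show ?thesis using \<open>a > 1\<close> by simp
qed

lemma exp_2pi_of_nat_mult:
  "exp (2 * pi * \<i> * of_nat n * complex_of_real \<theta>) = exp (2 * pi * \<i> * complex_of_real \<theta>) ^ n"
  using exp_of_nat_mult[of n "2 * pi * \<i> * complex_of_real \<theta>"] by (simp add: algebra_simps)

lemma unimodular_eq_exp_Arg:
  assumes "cmod z = 1"
  shows "z = exp (2 * pi * \<i> * complex_of_real (Arg z / (2 * pi)))"
  using assms complex_norm_eq_1_exp_eq by force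

lemma unimodular_simultaneous_return:
  fixes lam :: "nat \<Rightarrow> complex"
  assumes unit: "\<And>k. cmod (lam k) = 1" and "0 < e"
  shows "\<exists>n>M. \<forall>k<m. cmod (lam k ^ n - 1) < e"
proof -
  have "isCont (\<lambda>t::real. exp (2 * pi * \<i> * t)) 0" by (intro continuous_intros)
  then obtain \<eta> where "\<eta> > 0"
    and \<eta>: "\<And>t::real. \<bar>t\<bar> < \<eta> \<Longrightarrow> cmod (exp (2 * pi * \<i> * t) - 1) < e"
    using \<open>0 < e\<close> unfolding continuous_at_eps_delta dist_norm by force
  obtain L :: nat where "L > 0" and L: "inverse (real L) < \<eta>"
    using ex_inverse_of_nat_less[OF \<open>\<eta> > 0\<close>] by blast
  \<comment> \<open>Scaling the angles by M + 1 makes the Dirichlet denominator q give a time n = q (M + 1) > M.\<close>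
  define \<theta> where "\<theta> k = real (Suc M) * (Arg (lam k) / (2 * pi))" for k
  obtain q p where "0 < q" and approx: "\<And>k. k < m \<Longrightarrow> \<bar>of_int q * \<theta> k - of_int (p k)\<bar> < 1 / L"
    using Dirichlet_approx_simult[OF \<open>L > 0\<close>, where \<theta>=\<theta> and n=m] by blast
  define n where "n = nat q * Suc M"
  have "n > M" using \<open>0 < q\<close> by (cases "nat q") (simp_all add: n_def)
  moreover have "cmod (lam k ^ n - 1) < e" if "k < m" for k
  proof -
    have scaled: "real n * (Arg (lam k) / (2 * pi)) = of_int q * \<theta> k"
      using \<open>0 < q\<close> by (simp add: n_def \<theta>_def distrib_left)
    have "2 * pi * \<i> * complex_of_real (real n * (Arg (lam k) / (2 * pi))) =
        2 * pi * \<i> * complex_of_real (of_int q * \<theta> k - of_int (p k)) + \<i> * (of_int (p k) * (of_real pi * 2))"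
      unfolding scaled by (simp add: algebra_simps)
    hence "2 * pi * \<i> * of_nat n * complex_of_real (Arg (lam k) / (2 * pi)) =
        2 * pi * \<i> * complex_of_real (of_int q * \<theta> k - of_int (p k)) + \<i> * (of_int (p k) * (of_real pi * 2))"
      by simp
    hence "exp (2 * pi * \<i> * of_nat n * complex_of_real (Arg (lam k) / (2 * pi))) =
        exp (2 * pi * \<i> * complex_of_real (of_int q * \<theta> k - of_int (p k)))"
      by simp
    moreover have "lam k ^ n = exp (2 * pi * \<i> * of_nat n * complex_of_real (Arg (lam k) / (2 * pi)))"
      using arg_cong[where f="\<lambda>z. z ^ n", OF unimodular_eq_exp_Arg[OF unit[of k]]]
      by (simp only: exp_2pi_of_nat_mult)
    ultimately have lam_pow: "lam k ^ n = exp (2 * pi * \<i> * complex_of_real (of_int q * \<theta> k - of_int (p k)))"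
      by simp
    have "\<bar>of_int q * \<theta> k - of_int (p k)\<bar> < \<eta>"
      using approx[OF that] L by (simp add: divide_inverse)
    thus ?thesis unfolding lam_pow by (rule \<eta>)
  qed
  ultimately show ?thesis by blast
qed

lemma strict_mono_choice:
  assumes "\<And>j M. \<exists>n>M. P j n"
  obtains ks :: "nat \<Rightarrow> nat" where "strict_mono ks" "\<And>j. P j (ks j)"
proof -
  have "\<exists>ks. \<forall>j. P j (ks j) \<and> ks j < ks (Suc j)"
    by (rule dependent_nat_choice) (use assms in auto)
  thus ?thesis using that strict_mono_Suc_iff by blast
qed

lemma unimodular_powers_tendsto_one:
  fixes lam :: "nat \<Rightarrow> complex"
  assumes "\<And>k. cmod (lam k) = 1"
  obtains ks where "strict_mono ks" "\<And>j. 0 < ks j" "\<And>k. (\<lambda>j. lam k ^ ks j) \<longlonglongrightarrow> 1"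
proof -
  have "\<exists>n>M. 0 < n \<and> (\<forall>k<j. cmod (lam k ^ n - 1) < inverse (real (Suc j)))" for j M
    using unimodular_simultaneous_return[of lam, OF assms, where e="inverse (real (Suc j))" and M=M and m=j]
    by auto
  then obtain ks where "strict_mono ks"
    and ks: "\<And>j. 0 < ks j \<and> (\<forall>k<j. cmod (lam k ^ ks j - 1) < inverse (real (Suc j)))"
    by (rule strict_mono_choice[where
          P="\<lambda>j n. 0 < n \<and> (\<forall>k<j. cmod (lam k ^ n - 1) < inverse (real (Suc j)))"]) auto
  have "(\<lambda>j. lam k ^ ks j - 1) \<longlonglongrightarrow> 0" for k
  proof (rule Lim_null_comparison[OF _ LIMSEQ_inverse_real_of_nat])
    show "\<forall>\<^sub>F j in sequentially. norm (lam k ^ ks j - 1) \<le> inverse (real (Suc j))"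
      by (rule eventually_mono[OF eventually_gt_at_top[of k]]) (use ks in \<open>auto intro: less_imp_le\<close>)
  qed
  hence "(\<lambda>j. lam k ^ ks j) \<longlonglongrightarrow> 1" for k
    using tendsto_add[OF _ tendsto_const[of 1]] by fastforce
  thus ?thesis using that \<open>strict_mono ks\<close> ks by blast
qed

lemma liminf_eq_0_iff_subseq_tendsto_0:
  fixes s :: "nat \<Rightarrow> real"
  assumes "\<And>n. 0 \<le> s n"
  shows "liminf (\<lambda>n. ereal (s n)) = 0 \<longleftrightarrow>
    (\<exists>ks. strict_mono ks \<and> (\<forall>n. ks n > 0) \<and> (\<lambda>n. s (ks n)) \<longlonglongrightarrow> 0)"
proof
  assume "liminf (\<lambda>n. ereal (s n)) = 0"
  then obtain r where "strict_mono r" and "((\<lambda>n. ereal (s n)) \<circ> r) \<longlonglongrightarrow> 0"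
    using liminf_subseq_lim by metis
  hence "(\<lambda>n. s (r (Suc n))) \<longlonglongrightarrow> 0"
    by (intro LIMSEQ_Suc) (simp add: o_def zero_ereal_def)
  moreover have "strict_mono (\<lambda>n. r (Suc n))" "\<And>n. r (Suc n) > 0"
    using \<open>strict_mono r\<close> by (auto simp: strict_mono_def intro: le_less_trans)
  ultimately show "\<exists>ks. strict_mono ks \<and> (\<forall>n. ks n > 0) \<and> (\<lambda>n. s (ks n)) \<longlonglongrightarrow> 0"
    by blast
next
  assume "\<exists>ks. strict_mono ks \<and> (\<forall>n. ks n > 0) \<and> (\<lambda>n. s (ks n)) \<longlonglongrightarrow> 0"
  then obtain ks where "strict_mono ks" and lim: "(\<lambda>n. s (ks n)) \<longlonglongrightarrow> 0" by blast
  have "liminf (\<lambda>n. ereal (s n)) \<le> liminf ((\<lambda>n. ereal (s n)) \<circ> ks)"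
    by (rule liminf_subseq_mono[OF \<open>strict_mono ks\<close>])
  also have "\<dots> = 0"
    using lim by (intro lim_imp_Liminf) (simp_all add: o_def zero_ereal_def)
  finally show "liminf (\<lambda>n. ereal (s n)) = 0"
    using assms by (intro antisym Liminf_bounded) (simp_all add: zero_ereal_def)
qed

context sequence_space
begin

lemma diag_op_mem:
  assumes "bounded (range lam)" "x \<in> X"
  shows "diag_op lam x \<in> X"
  using assms multiplier_mem[of x lam] by (auto simp: diag_op_def bounded_iff)

lemma open_in_norm_coordinate:
  assumes "open S"
  shows "open_in_norm X N {y \<in> X. y k \<in> S}"
  unfolding open_in_norm_def
proof (intro conjI ballI)
  fix x assume x: "x \<in> {y \<in> X. y k \<in> S}"
  then obtain e where "e > 0" and e: "ball (x k) e \<subseteq> S"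
    using assms open_contains_ball by blast
  have "y k \<in> S" if "y \<in> X" "N (y - x) < e" for y
  proof -
    have "cmod (y k - x k) < e"
      using coordinate_le_norm[OF diff_mem[OF that(1)], of x k] x that(2) by simp
    thus ?thesis using e by (auto simp: dist_norm norm_minus_commute)
  qed
  thus "\<exists>e>0. \<forall>y\<in>X. N (y - x) < e \<longrightarrow> y \<in> {y \<in> X. y k \<in> S}" using \<open>e > 0\<close> by blast
qed auto

lemma recurrent_imp_unimodular:
  assumes "recurrent X N (diag_op lam)"
  shows "cmod (lam k) = 1"
proof (rule ccontr)
  define a where "a = cmod (lam k)"
  define \<delta> where "\<delta> = \<bar>a - 1\<bar> / (a + 1)"
  assume "cmod (lam k) \<noteq> 1"
  hence "a \<noteq> 1" by (simp add: a_def)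
  have "0 < \<delta>" unfolding \<delta>_def using \<open>a \<noteq> 1\<close> norm_ge_zero[of "lam k"]
    by (auto simp: a_def intro!: divide_pos_pos add_nonneg_pos)
  define U where "U = {y \<in> X. y k \<in> {z. \<bar>cmod z - 1\<bar> < \<delta>}}"
  have "open {z::complex. \<bar>cmod z - 1\<bar> < \<delta>}"
    by (intro open_Collect_less continuous_intros)
  hence "open_in_norm X N U" unfolding U_def by (rule open_in_norm_coordinate)
  moreover have "(\<lambda>j. if j = k then 1 else 0) \<in> U"
    using unit_vector_mem \<open>0 < \<delta>\<close> by (simp add: U_def)
  ultimately obtain n x where "n > 0" "x \<in> U" "(diag_op lam ^^ n) x \<in> U"
    using assms unfolding recurrent_def by blast
  hence "\<bar>cmod (x k) - 1\<bar> < \<delta>" "\<bar>a ^ n * cmod (x k) - 1\<bar> < \<delta>"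
    by (simp_all add: U_def funpow_diag_op norm_mult norm_power a_def)
  thus False
    using power_mult_far_from_one[of a n "cmod (x k)"] \<open>a \<noteq> 1\<close> \<open>n > 0\<close>
    by (simp add: \<delta>_def a_def)
qed

lemma unimodular_imp_rigid:
  assumes unit: "\<And>k. cmod (lam k) = 1"
  shows "rigid X N (diag_op lam)"
proof -
  obtain ks where ks: "strict_mono ks" "\<And>j. 0 < ks j" "\<And>k. (\<lambda>j. lam k ^ ks j) \<longlonglongrightarrow> 1"
    using unimodular_powers_tendsto_one[of lam, OF unit] by blast
  have "(\<lambda>j. N ((diag_op lam ^^ ks j) x - x)) \<longlonglongrightarrow> 0" if "x \<in> X" for x
    unfolding funpow_diag_op_minus
  proof (rule multipliers_tendsto_0[OF that])
    show "cmod (lam k ^ ks j - 1) \<le> 2" for j k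
      using norm_triangle_ineq4[of "lam k ^ ks j" 1] unit[of k] by (simp add: norm_power)
    show "(\<lambda>j. lam k ^ ks j - 1) \<longlonglongrightarrow> 0" for k
      using tendsto_diff[OF ks(3)[of k] tendsto_const[of 1]] by simp
  qed
  thus ?thesis unfolding rigid_def using ks by blast
qed

lemma op_norm_multiplier:
  assumes d: "\<And>k. cmod (d k) \<le> B"
  shows "op_norm X N (\<lambda>x k. d k * x k) = (SUP k. cmod (d k))"
proof -
  define S where "S = {x \<in> X. N x \<le> 1}"
  define \<sigma> where "\<sigma> = (SUP k. cmod (d k))"
  have bdd_d: "bdd_above (range (\<lambda>k. cmod (d k)))" using d by (rule bdd_aboveI2)
  hence d_le: "cmod (d k) \<le> \<sigma>" for k unfolding \<sigma>_def by (rule cSUP_upper[rotated]) simp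
  have "0 \<le> \<sigma>" using d_le[of 0] norm_ge_zero order_trans by blast
  have S_le: "N (\<lambda>k. d k * x k) \<le> \<sigma>" if "x \<in> S" for x
  proof -
    have "N (\<lambda>k. d k * x k) \<le> \<sigma> * N x" using norm_multiplier_le that d_le by (simp add: S_def)
    also have "\<dots> \<le> \<sigma>" using that \<open>0 \<le> \<sigma>\<close> mult_left_mono[of "N x" 1 \<sigma>] by (simp add: S_def)
    finally show ?thesis .
  qed
  have e: "(\<lambda>j. if j = k then 1 else 0) \<in> S" for k
    using unit_vector_mem norm_unit_vector by (simp add: S_def)
  have "cmod (d k) \<le> op_norm X N (\<lambda>x k. d k * x k)" for k
  proof -
    have "cmod (d k) \<le> N (\<lambda>j. d j * (if j = k then 1 else 0))"
      using coordinate_le_norm[OF multiplier_mem[OF unit_vector_mem[of k] d], where k=k] by simp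
    also have "\<dots> \<le> op_norm X N (\<lambda>x k. d k * x k)"
      unfolding op_norm_def S_def[symmetric] using e S_le by (intro cSUP_upper bdd_aboveI2) auto
    finally show ?thesis .
  qed
  hence "\<sigma> \<le> op_norm X N (\<lambda>x k. d k * x k)" unfolding \<sigma>_def by (intro cSUP_least) auto
  moreover have "op_norm X N (\<lambda>x k. d k * x k) \<le> \<sigma>"
    unfolding op_norm_def S_def[symmetric] using e S_le by (intro cSUP_least) auto
  ultimately show ?thesis by (simp add: \<sigma>_def)
qed

lemma op_norm_funpow_diag_op_minus:
  assumes "bounded (range lam)"
  shows "op_norm X N (\<lambda>x. (diag_op lam ^^ n) x - x) = (SUP k. cmod (lam k ^ n - 1))"
  unfolding funpow_diag_op_minus using power_minus_one_le_SUP[OF assms] by (rule op_norm_multiplier)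

lemma uniformly_rigid_imp_rigid:
  assumes "bounded (range lam)" "uniformly_rigid X N (diag_op lam)"
  shows "rigid X N (diag_op lam)"
proof -
  obtain ks where ks: "strict_mono ks" "\<And>j. 0 < ks j"
    and lim: "(\<lambda>j. SUP k. cmod (lam k ^ ks j - 1)) \<longlonglongrightarrow> 0"
    using assms unfolding uniformly_rigid_def op_norm_funpow_diag_op_minus[OF assms(1)] by blast
  have "(\<lambda>j. N ((diag_op lam ^^ ks j) x - x)) \<longlonglongrightarrow> 0" if "x \<in> X" for x
  proof (rule Lim_null_comparison[OF always_eventually])
    show "(\<lambda>j. (SUP k. cmod (lam k ^ ks j - 1)) * N x) \<longlonglongrightarrow> 0"
      using tendsto_mult_left_zero[OF lim] .
    show "\<forall>j. norm (N ((diag_op lam ^^ ks j) x - x)) \<le> (SUP k. cmod (lam k ^ ks j - 1)) * N x"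
    proof
      fix j
      note sup_bound = power_minus_one_le_SUP[OF assms(1), where n="ks j"]
      hence "N (\<lambda>k. (lam k ^ ks j - 1) * x k) \<le> (SUP k. cmod (lam k ^ ks j - 1)) * N x"
        by (rule norm_multiplier_le[OF that])
      moreover have "0 \<le> N (\<lambda>k. (lam k ^ ks j - 1) * x k)"
        by (rule order_trans[OF norm_ge_zero coordinate_le_norm[where k=0]])
          (rule multiplier_mem[OF that sup_bound])
      ultimately show "norm (N ((diag_op lam ^^ ks j) x - x)) \<le> (SUP k. cmod (lam k ^ ks j - 1)) * N x"
        by (simp add: funpow_diag_op_minus)
    qed
  qed
  thus ?thesis unfolding rigid_def using ks by blast
qed

lemma uniformly_rigid_iff_liminf:
  assumes "bounded (range lam)"
  shows "uniformly_rigid X N (diag_op lam) \<longleftrightarrow> liminf (\<lambda>n. ereal (SUP k. cmod (lam k ^ n - 1))) = 0"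
proof -
  have "0 \<le> (SUP k. cmod (lam k ^ n - 1))" for n
    using norm_ge_zero power_minus_one_le_SUP[OF assms, where k=0] by (rule order_trans)
  thus ?thesis unfolding uniformly_rigid_def op_norm_funpow_diag_op_minus[OF assms]
    by (rule liminf_eq_0_iff_subseq_tendsto_0[symmetric])
qed

lemma rigid_diag_op_imp_recurrent:
  assumes "bounded (range lam)" "rigid X N (diag_op lam)"
  shows "recurrent X N (diag_op lam)"
  by (rule rigid_imp_recurrent[where T="diag_op lam"]) (use assms diag_op_mem in auto)

lemma rigid_iff_unimodular:
  assumes "bounded (range lam)"
  shows "rigid X N (diag_op lam) \<longleftrightarrow> (\<forall>k. cmod (lam k) = 1)"
  using rigid_diag_op_imp_recurrent[OF assms] recurrent_imp_unimodular unimodular_imp_rigid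
  by blast

lemma recurrent_iff_rigid:
  assumes "bounded (range lam)"
  shows "recurrent X N (diag_op lam) \<longleftrightarrow> rigid X N (diag_op lam)"
  using rigid_diag_op_imp_recurrent[OF assms] recurrent_imp_unimodular unimodular_imp_rigid
  by blast

lemma uniformly_rigid_iff_exp_liminf:
  assumes "bounded (range lam)"
  shows "uniformly_rigid X N (diag_op lam) \<longleftrightarrow>
    (\<exists>\<theta>::nat \<Rightarrow> real. (\<forall>k. lam k = exp (2 * pi * \<i> * complex_of_real (\<theta> k)))
      \<and> liminf (\<lambda>n. ereal (SUP k. cmod (exp (2 * pi * \<i> * of_nat n * complex_of_real (\<theta> k)) - 1))) = 0)"
proof -
  have liminf_exp: "liminf (\<lambda>n. ereal (SUP k. cmod (exp (2 * pi * \<i> * of_nat n * complex_of_real (\<theta> k)) - 1)))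
      = liminf (\<lambda>n. ereal (SUP k. cmod (lam k ^ n - 1)))"
    if "\<forall>k. lam k = exp (2 * pi * \<i> * complex_of_real (\<theta> k))" for \<theta>
    unfolding exp_2pi_of_nat_mult using that by simp
  show ?thesis
  proof
    assume uniform: "uniformly_rigid X N (diag_op lam)"
    define \<theta> where "\<theta> k = Arg (lam k) / (2 * pi)" for k
    have "\<forall>k. lam k = exp (2 * pi * \<i> * complex_of_real (\<theta> k))"
      using uniformly_rigid_imp_rigid[OF assms uniform] rigid_iff_unimodular[OF assms]
        unimodular_eq_exp_Arg
      unfolding \<theta>_def by blast
    with uniform show "\<exists>\<theta>. (\<forall>k. lam k = exp (2 * pi * \<i> * complex_of_real (\<theta> k)))
        \<and> liminf (\<lambda>n. ereal (SUP k. cmod (exp (2 * pi * \<i> * of_nat n * complex_of_real (\<theta> k)) - 1))) = 0"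
      using liminf_exp uniformly_rigid_iff_liminf[OF assms] by auto
  qed (use liminf_exp uniformly_rigid_iff_liminf[OF assms] in auto)
qed

end

theorem theorem5p4:
  fixes X :: "(nat \<Rightarrow> complex) set" and N :: "(nat \<Rightarrow> complex) \<Rightarrow> real"
    and lam :: "nat \<Rightarrow> complex"
  assumes "admissible_space X N"
    and "bounded (range lam)"
  shows "(recurrent X N (diag_op lam) \<longleftrightarrow> rigid X N (diag_op lam))
       \<and> (rigid X N (diag_op lam) \<longleftrightarrow> (\<forall>k. cmod (lam k) = 1))
       \<and> (uniformly_rigid X N (diag_op lam) \<longleftrightarrow>
            (\<exists>\<theta>::nat \<Rightarrow> real. (\<forall>k. lam k = exp (2 * pi * \<i> * complex_of_real (\<theta> k)))
               \<and> liminf (\<lambda>n::nat. ereal (SUP k. cmod (exp (2 * pi * \<i> * of_nat n * complex_of_real (\<theta> k)) - 1))) = 0))"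
proof -
  interpret sequence_space X N using assms(1) by (rule sequence_space_admissible)
  show ?thesis
    using recurrent_iff_rigid[OF assms(2)] rigid_iff_unimodular[OF assms(2)]
      uniformly_rigid_iff_exp_liminf[OF assms(2)]
    by blast
qed

end
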